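(* Let $B_0,\ldots,B_{m-1}$ be $d \times d$ real matrices, and suppose that $x \in \Sigma_m^\omega$ is very weakly extremal for $\mathcal{B}=\{B_0,\ldots,B_{m-1}\}$. Then there exists $y \in \Sigma_m^\omega$ which is recurrent and strongly extremal for $\mathcal{B}$, and satisfies $\mathcal L(y)\subseteq\mathcal L(x)$.
   Context: $\Sigma_m=\{0,\ldots,m-1\}$, $\Sigma_m^\omega$ is the set of infinite sequences $x=x_1x_2\cdots$ over $\Sigma_m$. A subword of $x$ is a finite word $x_{k+1}\cdots x_{k+n}$ with $k\ge0$, $n\ge1$; $\mathcal L(x)$ denotes the set of all subwords of $x$. A sequence is recurrent if every one of its subwords occurs infinitely many times in it. The joint spectral radius is $\varrho(\mathcal{B})=\lim_{n\to\infty}\max\{\|B_{i_1}\cdots B_{i_n}\|^{1/n}: i_j\in\Sigma_m\}$, with $\|\cdot\|$ the Euclidean operator norm. A sequence $x$ is strongly extremal for $\mathcal{B}$ if there is $\delta>0$ with $\|B_{x_n}\cdots B_{x_1}\|\ge\delta\varrho(\mathcal{B})^n$ for all $n\ge1$, and very weakly extremal for $\mathcal{B}$ if $\limsup_{n\to\infty}\|B_{x_n}\cdots B_{x_1}\|^{1/n}=\varrho(\mathcal{B})$. *)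

theory Defs
  imports "HOL-Analysis.Analysis"
begin

text \<open>A family B_0..B_{m-1} is a function B :: nat => matrix, only indices < m matter.
  Infinite sequences x = x_1 x_2 ... over Sigma_m are functions nat => nat,
  read from index 1 on; we require x n < m for all n (the value at 0 is unused).\<close>

definition opnorm :: "real^'d^'d \<Rightarrow> real" where
  "opnorm A = onorm (\<lambda>v. A *v v)"

fun wprod :: "(nat \<Rightarrow> real^'d^'d) \<Rightarrow> (nat \<Rightarrow> nat) \<Rightarrow> nat \<Rightarrow> real^'d^'d" where
  "wprod B x 0 = mat 1"
| "wprod B x (Suc n) = B (x (Suc n)) ** wprod B x n"

definition seqs :: "nat \<Rightarrow> (nat \<Rightarrow> nat) set" where
  "seqs m = {x. \<forall>n. x n < m}"

definition jsr :: "(nat \<Rightarrow> real^'d^'d) \<Rightarrow> nat \<Rightarrow> real" where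
  "jsr B m = lim (\<lambda>n. Max ((\<lambda>w. opnorm (wprod B w n) powr (1 / real n)) `
                        {w. \<forall>j \<in> {1..n}. w j < m}))"

definition strongly_extremal :: "(nat \<Rightarrow> real^'d^'d) \<Rightarrow> nat \<Rightarrow> (nat \<Rightarrow> nat) \<Rightarrow> bool" where
  "strongly_extremal B m x \<longleftrightarrow>
     (\<exists>\<delta>>0. \<forall>n\<ge>1. opnorm (wprod B x n) \<ge> \<delta> * jsr B m ^ n)"

definition very_weakly_extremal :: "(nat \<Rightarrow> real^'d^'d) \<Rightarrow> nat \<Rightarrow> (nat \<Rightarrow> nat) \<Rightarrow> bool" where
  "very_weakly_extremal B m x \<longleftrightarrow>
     limsup (\<lambda>n. ereal (opnorm (wprod B x n) powr (1 / real n))) = ereal (jsr B m)"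

definition subwords :: "(nat \<Rightarrow> nat) \<Rightarrow> nat list set" where
  "subwords x = {map x [k+1..<k+n+1] | k n. n \<ge> 1}"

definition recurrent :: "(nat \<Rightarrow> nat) \<Rightarrow> bool" where
  "recurrent x \<longleftrightarrow>
     (\<forall>u \<in> subwords x. infinite {k. map x [k+1..<k+length u+1] = u})"

end

theory Submission
  imports Defs
begin

text \<open>Let \<open>\<rho>\<close> be the joint spectral radius and call a sequence \<open>w\<close> extremal up to \<open>N\<close> if
  \<open>\<parallel>B\<^sub>w\<^sub>j \<cdots> B\<^sub>w\<^sub>1\<parallel> \<ge> \<rho>\<^sup>j/2\<close> for \<open>1 \<le> j \<le> N\<close>. If the products along \<open>z\<close> exceed \<open>q\<^sup>n\<close> infinitely
  often for every \<open>q < \<rho>\<close>, then for every \<open>N\<close> infinitely many shifts of \<open>z\<close> are extremal up to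
  \<open>N\<close>: otherwise, by submultiplicativity, every window of length \<open>N\<close> far out would contain a drop
  below \<open>(\<rho> 2\<^sup>-\<^sup>1\<^sup>/\<^sup>N)\<^sup>j\<close>, and the norms along \<open>z\<close> would grow at most like \<open>(\<rho> 2\<^sup>-\<^sup>1\<^sup>/\<^sup>N)\<^sup>n\<close>.

  In the compact space of sequences, Zorn's lemma gives a minimal closed shift-invariant set \<open>Z\<close> of
  sequences with subwords from \<open>x\<close> that contains, for each \<open>N\<close>, a point extremal up to \<open>N\<close>.
  By compactness \<open>Z\<close> contains a point \<open>y\<close> extremal up to every \<open>N\<close>, i.e. strongly extremal with
  \<open>\<delta> = 1/2\<close>. The \<open>\<omega>\<close>-limit set of \<open>y\<close> inherits all defining properties of \<open>Z\<close>, so it equals \<open>Z\<close>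
  by minimality; hence \<open>y\<close> lies in its own \<open>\<omega>\<close>-limit set, which is recurrence.\<close>

definition shift :: "nat \<Rightarrow> (nat \<Rightarrow> 'a) \<Rightarrow> nat \<Rightarrow> 'a" where
  "shift k z = (\<lambda>i. z (k + i))"

lemma shift_seqs: "z \<in> seqs m \<Longrightarrow> shift k z \<in> seqs m"
  by (simp add: seqs_def shift_def)

lemma subwords_shift: "subwords (shift k z) \<subseteq> subwords z"
proof
  fix u assume "u \<in> subwords (shift k z)"
  then obtain l n where u: "u = map (shift k z) [l+1..<l+n+1]" "n \<ge> 1"
    unfolding subwords_def by blast
  have "u = map z [(k+l)+1..<(k+l)+n+1]"
    unfolding u(1) by (simp add: shift_def list_eq_iff_nth_eq add.assoc del: upt_Suc)
  then show "u \<in> subwords z" using u(2) unfolding subwords_def by blast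
qed

section \<open>Topology of the sequence space\<close>

lemma open_cylinder:
  assumes "finite I"
  shows "open {z :: 'a \<Rightarrow> 'b::discrete_topology. \<forall>i\<in>I. z i = w i}"
  using product_topology_basis'[OF assms, where x=id and U="\<lambda>i. {w i}"]
  by (simp add: open_discrete)

lemma closed_finitely_determined:
  fixes P :: "('a \<Rightarrow> 'b::discrete_topology) \<Rightarrow> bool"
  assumes "finite I" and "\<And>z z'. \<forall>i\<in>I. z i = z' i \<Longrightarrow> P z \<longleftrightarrow> P z'"
  shows "closed {z. P z}"
  unfolding closed_def open_subopen[of "- {z. P z}"]
proof
  fix z assume "z \<in> - {z. P z}"
  then show "\<exists>T. open T \<and> z \<in> T \<and> T \<subseteq> - {z. P z}"
    using assms by (intro exI[of _ "{z'. \<forall>i\<in>I. z' i = z i}"]) (auto intro: open_cylinder)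
qed

lemma closure_cylinderD:
  fixes w :: "'a \<Rightarrow> 'b::discrete_topology"
  assumes "finite I" and "w \<in> closure S"
  shows "\<exists>z\<in>S. \<forall>i\<in>I. z i = w i"
proof -
  have "open {z. \<forall>i\<in>I. z i = w i}" "w \<in> {z. \<forall>i\<in>I. z i = w i}"
    using assms(1) by (auto intro: open_cylinder)
  then show ?thesis
    using assms(2) unfolding closure_iff_nhds_not_empty by blast
qed

lemma continuous_on_shift: "continuous_on UNIV (shift k :: (nat \<Rightarrow> 'a::topological_space) \<Rightarrow> _)"
  unfolding shift_def
  by (intro continuous_on_coordinatewise_then_product continuous_on_product_coordinates)

lemma compact_seqs: "compact (seqs m)"
proof -
  have "seqs m = Pi\<^sub>E UNIV (\<lambda>_. {..<m})"
    by (auto simp: seqs_def)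
  moreover have "compactin (product_topology (\<lambda>_. euclidean) UNIV) (Pi\<^sub>E UNIV (\<lambda>_::nat. {..<m}))"
    by (simp add: compactin_PiE finite_imp_compact)
  ultimately show ?thesis
    by (simp add: euclidean_product_topology)
qed

lemma closed_seqs: "closed (seqs m)"
proof -
  have "closed {z :: nat \<Rightarrow> nat. z i < m}" for i
    by (rule closed_finitely_determined[of "{i}"]) auto
  moreover have "seqs m = (\<Inter>i. {z. z i < m})"
    by (auto simp: seqs_def)
  ultimately show ?thesis by auto
qed

lemma closed_subwords_subset: "closed {w. subwords w \<subseteq> S}"
proof -
  have eq: "{w. subwords w \<subseteq> S} = (\<Inter>k. \<Inter>n. {w. 1 \<le> n \<longrightarrow> map w [k+1..<k+n+1] \<in> S})"
    by (auto simp: subwords_def)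
  have "closed {w. 1 \<le> n \<longrightarrow> map w [k+1..<k+n+1] \<in> S}" for k n
  proof (rule closed_finitely_determined[of "{k+1..<k+n+1}"])
    fix w w' :: "nat \<Rightarrow> nat" assume "\<forall>i\<in>{k+1..<k+n+1}. w i = w' i"
    then have "map w [k+1..<k+n+1] = map w' [k+1..<k+n+1]"
      by (intro map_cong) auto
    then show "(1 \<le> n \<longrightarrow> map w [k+1..<k+n+1] \<in> S) \<longleftrightarrow> (1 \<le> n \<longrightarrow> map w' [k+1..<k+n+1] \<in> S)"
      by (simp only:)
  qed simp
  then show ?thesis
    unfolding eq by blast
qed

lemma closed_chain_Inter_nonempty:
  assumes "compact K" and "\<And>S. S \<in> F \<Longrightarrow> closed S \<and> S \<noteq> {} \<and> S \<subseteq> K"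
    and chain: "\<And>S T. S \<in> F \<Longrightarrow> T \<in> F \<Longrightarrow> S \<subseteq> T \<or> T \<subseteq> S"
  shows "\<Inter>F \<noteq> {}"
proof (cases "F = {}")
  case False
  have "K \<inter> \<Inter>F \<noteq> {}"
  proof (rule compact_imp_fip[OF assms(1)])
    fix F' assume F': "finite F'" "F' \<subseteq> F"
    show "K \<inter> \<Inter>F' \<noteq> {}"
    proof (cases "F' = {}")
      case True
      then show ?thesis using False assms(2) by auto
    next
      case nonempty: False
      have "subset.chain F F'"
        using F'(2) chain by (auto simp: subset_chain_def)
      then have "\<Inter>F' \<in> F'"
        by (rule Inter_in_chain[OF F'(1) nonempty])
      then show ?thesis using F'(2) assms(2) by blast
    qed
  qed (use assms(2) in blast)
  then show ?thesis by blast
qed simp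

lemma subset_Zorn_minimal:
  assumes "A \<noteq> {}" and chain: "\<And>C. C \<noteq> {} \<Longrightarrow> subset.chain A C \<Longrightarrow> \<Inter>C \<in> A"
  shows "\<exists>M\<in>A. \<forall>X\<in>A. X \<subseteq> M \<longrightarrow> X = M"
proof -
  have "\<exists>M\<in>uminus ` A. \<forall>X\<in>uminus ` A. M \<subseteq> X \<longrightarrow> X = M"
  proof (rule subset_Zorn_nonempty)
    fix C assume "C \<noteq> {}" "subset.chain (uminus ` A) C"
    then have "uminus ` C \<noteq> {}" "subset.chain A (uminus ` C)"
      by (auto simp: subset_chain_def)
    then have "\<Inter>(uminus ` C) \<in> A" by (rule chain)
    moreover have "\<Union>C = - \<Inter>(uminus ` C)" by auto
    ultimately show "\<Union>C \<in> uminus ` A" by blast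
  qed (use assms(1) in blast)
  then show ?thesis
    by (metis (no_types, lifting) compl_le_compl_iff double_compl image_iff)
qed

section \<open>Norms of products along a sequence\<close>

lemma opnorm_nonneg: "0 \<le> opnorm A"
  unfolding opnorm_def by (rule onorm_pos_le) simp

lemma opnorm_mult: "opnorm (A ** C) \<le> opnorm A * opnorm C"
proof -
  have "(\<lambda>v. (A ** C) *v v) = (\<lambda>v. A *v v) \<circ> (\<lambda>v. C *v v)"
    by (auto simp: matrix_vector_mul_assoc)
  then show ?thesis
    unfolding opnorm_def by (simp add: onorm_compose)
qed

lemma opnorm_mat_one: "opnorm (mat 1 :: real^'d^'d) \<le> 1"
proof -
  have "(\<lambda>v. (mat 1 :: real^'d^'d) *v v) = (\<lambda>v. v)" by simp
  then show ?thesis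
    unfolding opnorm_def using onorm_id_le by metis
qed

lemma wprod_add: "wprod B z (k + j) = wprod B (shift k z) j ** wprod B z k"
  by (induction j) (auto simp: shift_def matrix_mul_assoc)

lemma wprod_cong: "\<forall>i\<in>{1..n}. w i = w' i \<Longrightarrow> wprod B w n = wprod B w' n"
  by (induction n) auto

lemma opnorm_wprod_le:
  assumes "w \<in> seqs m"
  shows "opnorm (wprod B w n) \<le> (1 + (\<Sum>i<m. opnorm (B i))) ^ n"
proof (induction n)
  case 0
  then show ?case using opnorm_mat_one by simp
next
  case (Suc n)
  have "opnorm (B (w (Suc n))) \<le> (\<Sum>i<m. opnorm (B i))"
    using assms by (intro member_le_sum) (auto simp: seqs_def opnorm_nonneg)
  then have B_le: "opnorm (B (w (Suc n))) \<le> 1 + (\<Sum>i<m. opnorm (B i))"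
    by simp
  have "opnorm (wprod B w (Suc n)) \<le> opnorm (B (w (Suc n))) * opnorm (wprod B w n)"
    by (simp add: opnorm_mult)
  also have "\<dots> \<le> (1 + (\<Sum>i<m. opnorm (B i))) * (1 + (\<Sum>i<m. opnorm (B i))) ^ n"
    using B_le Suc.IH by (intro mult_mono) (auto simp: opnorm_nonneg sum_nonneg)
  finally show ?case by simp
qed

section \<open>Windows of extremal growth\<close>

definition extremal_upto :: "real \<Rightarrow> (nat \<Rightarrow> real^'d^'d) \<Rightarrow> nat \<Rightarrow> (nat \<Rightarrow> nat) \<Rightarrow> bool" where
  "extremal_upto \<rho> B N w \<longleftrightarrow> (\<forall>j\<in>{1..N}. \<rho> ^ j / 2 \<le> opnorm (wprod B w j))"

lemma extremal_upto_trivial: "N = 0 \<or> \<rho> = 0 \<Longrightarrow> extremal_upto \<rho> B N w"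
  by (auto simp: extremal_upto_def opnorm_nonneg power_0_left)

lemma extremal_upto_mono: "extremal_upto \<rho> B N w \<Longrightarrow> L \<le> N \<Longrightarrow> extremal_upto \<rho> B L w"
  by (auto simp: extremal_upto_def)

lemma closed_extremal_upto: "closed {w. extremal_upto \<rho> B N w}"
proof (rule closed_finitely_determined[of "{1..N}"])
  fix w w' :: "nat \<Rightarrow> nat" assume "\<forall>i\<in>{1..N}. w i = w' i"
  then have "wprod B w j = wprod B w' j" if "j \<le> N" for j
    using that by (intro wprod_cong) auto
  then show "extremal_upto \<rho> B N w \<longleftrightarrow> extremal_upto \<rho> B N w'"
    by (auto simp: extremal_upto_def)
qed simp

lemma frequently_above_if_extremal_upto:
  assumes "\<forall>N. extremal_upto \<rho> B N y" and "0 < q" "q < \<rho>"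
  shows "\<exists>\<^sub>F n in sequentially. q ^ n < opnorm (wprod B y n)"
proof -
  have "(\<lambda>n. (q / \<rho>) ^ n) \<longlonglongrightarrow> 0"
    using assms by (intro LIMSEQ_power_zero) auto
  then have "\<forall>\<^sub>F n in sequentially. (q / \<rho>) ^ n < 1 / 2 \<and> 1 \<le> n"
    by (intro eventually_conj order_tendstoD(2) eventually_ge_at_top) auto
  then have "\<forall>\<^sub>F n in sequentially. q ^ n < opnorm (wprod B y n)"
  proof (rule eventually_mono)
    fix n assume n: "(q / \<rho>) ^ n < 1 / 2 \<and> 1 \<le> n"
    have "q ^ n = (q / \<rho>) ^ n * \<rho> ^ n"
      using assms by (simp add: power_divide)
    also have "\<dots> < 1 / 2 * \<rho> ^ n"
      using n assms by (intro mult_strict_right_mono) auto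
    also have "\<dots> \<le> opnorm (wprod B y n)"
    proof -
      have "\<rho> ^ n / 2 \<le> opnorm (wprod B y n)"
        using assms(1) n unfolding extremal_upto_def by (meson atLeastAtMost_iff order_refl)
      then show ?thesis by simp
    qed
    finally show "q ^ n < opnorm (wprod B y n)" .
  qed
  then show ?thesis
    by (rule eventually_frequently[rotated]) simp
qed

lemma geometric_stepping_stones:
  fixes a :: "nat \<Rightarrow> real" and b :: "nat \<Rightarrow> nat \<Rightarrow> real"
  assumes a_nonneg: "\<And>n. 0 \<le> a n" and step: "\<And>t l. a (t + l) \<le> b t l * a t"
    and drop: "\<And>t. K \<le> t \<Longrightarrow> \<exists>j\<in>{1..N}. b t j \<le> r ^ j" and "0 \<le> r" and "K \<le> n"
  shows "\<exists>t. K \<le> t \<and> t \<le> n \<and> n \<le> t + N \<and> a t \<le> a K * r ^ (t - K)"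
  using \<open>K \<le> n\<close>
proof (induction n rule: nat_induct_at_least)
  case base
  then show ?case by auto
next
  case (Suc n)
  then obtain t where t: "K \<le> t" "t \<le> n" "n \<le> t + N" "a t \<le> a K * r ^ (t - K)"
    by auto
  show ?case
  proof (cases "Suc n \<le> t + N")
    case True
    then show ?thesis using t by auto
  next
    case False
    obtain j where j: "j \<in> {1..N}" "b t j \<le> r ^ j"
      using drop t(1) by blast
    have "a (t + j) \<le> b t j * a t" by (rule step)
    also have "\<dots> \<le> r ^ j * (a K * r ^ (t - K))"
      using j(2) t(4) a_nonneg \<open>0 \<le> r\<close> by (intro mult_mono) auto
    also have "\<dots> = a K * r ^ (j + (t - K))"
      by (simp add: power_add)
    also have "j + (t - K) = t + j - K"
      using t(1) by simp
    finally show ?thesis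
      using t j False by (intro exI[of _ "t + j"]) auto
  qed
qed

lemma bounded_by_geometric_if_windows_drop:
  fixes a :: "nat \<Rightarrow> real" and b :: "nat \<Rightarrow> nat \<Rightarrow> real"
  assumes a_nonneg: "\<And>n. 0 \<le> a n" and step: "\<And>t l. a (t + l) \<le> b t l * a t"
    and drop: "\<And>t. K \<le> t \<Longrightarrow> \<exists>j\<in>{1..N}. b t j \<le> r ^ j"
    and b_le: "\<And>t l. b t l \<le> c ^ l" and "1 \<le> c" and "0 < r"
  shows "\<exists>D. \<forall>n\<ge>K. a n \<le> D * r ^ n"
proof -
  define \<mu> where "\<mu> = min 1 r"
  have \<mu>: "0 < \<mu>" "\<mu> \<le> 1" "\<mu> \<le> r"
    using \<open>0 < r\<close> by (auto simp: \<mu>_def)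
  have "a n \<le> (c ^ N * a K / \<mu> ^ (N + K)) * r ^ n" if n: "K \<le> n" for n
  proof -
    obtain t where t: "K \<le> t" "t \<le> n" "n \<le> t + N" "a t \<le> a K * r ^ (t - K)"
      using geometric_stepping_stones[OF a_nonneg step drop _ n] \<open>0 < r\<close> by auto
    have "\<mu> ^ (N + K) \<le> \<mu> ^ (n - t + K)"
      using t \<mu> by (intro power_decreasing) auto
    also have "\<dots> \<le> r ^ (n - t + K)"
      using \<mu> by (intro power_mono) auto
    finally have "\<mu> ^ (N + K) \<le> r ^ (n - t + K)" .
    then have "r ^ (t - K) * \<mu> ^ (N + K) \<le> r ^ (t - K) * r ^ (n - t + K)"
      using \<open>0 < r\<close> by (intro mult_left_mono) auto
    also have "\<dots> = r ^ n"
      using t by (simp flip: power_add)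
    finally have r_le: "r ^ (t - K) \<le> r ^ n / \<mu> ^ (N + K)"
      using \<mu> by (simp add: field_simps)
    have "a n \<le> b t (n - t) * a t"
      using step[of t "n - t"] t(2) by simp
    also have "\<dots> \<le> c ^ N * (a K * r ^ (t - K))"
    proof (rule mult_mono)
      show "b t (n - t) \<le> c ^ N"
        by (rule order_trans[OF b_le power_increasing]) (use t \<open>1 \<le> c\<close> in auto)
    qed (use t a_nonneg \<open>1 \<le> c\<close> in auto)
    also have "\<dots> \<le> c ^ N * (a K * (r ^ n / \<mu> ^ (N + K)))"
      using r_le a_nonneg \<open>1 \<le> c\<close> by (intro mult_left_mono) auto
    finally show ?thesis by simp
  qed
  then show ?thesis by blast
qed

lemma not_frequently_above_geometric:
  fixes a :: "nat \<Rightarrow> real"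
  assumes "\<forall>n\<ge>K. a n \<le> D * r ^ n" and "0 < r" "r < q"
  shows "\<not> (\<exists>\<^sub>F n in sequentially. q ^ n < a n)"
proof -
  have "(\<lambda>n. D * (r / q) ^ n) \<longlonglongrightarrow> 0"
    using assms by (intro tendsto_mult_right_zero LIMSEQ_power_zero) auto
  then have "\<forall>\<^sub>F n in sequentially. D * (r / q) ^ n < 1 \<and> K \<le> n"
    by (intro eventually_conj order_tendstoD(2) eventually_ge_at_top) auto
  then have "\<forall>\<^sub>F n in sequentially. a n \<le> q ^ n"
  proof (rule eventually_mono)
    fix n assume n: "D * (r / q) ^ n < 1 \<and> K \<le> n"
    have "a n \<le> D * (r / q) ^ n * q ^ n"
      using assms n by (simp add: power_divide)
    also have "\<dots> \<le> 1 * q ^ n"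
      using n assms by (intro mult_right_mono) auto
    finally show "a n \<le> q ^ n" by simp
  qed
  then show ?thesis
    by (simp add: not_frequently not_less)
qed

lemma frequently_extremal_upto_shift:
  fixes B :: "nat \<Rightarrow> real^'d^'d"
  assumes z: "z \<in> seqs m" and "0 \<le> \<rho>"
    and above: "\<And>q. 0 < q \<Longrightarrow> q < \<rho> \<Longrightarrow> \<exists>\<^sub>F n in sequentially. q ^ n < opnorm (wprod B z n)"
  shows "\<exists>\<^sub>F k in sequentially. extremal_upto \<rho> B N (shift k z)"
proof (cases "N = 0 \<or> \<rho> = 0")
  case True
  then show ?thesis by (simp add: extremal_upto_trivial)
next
  case False
  then have "1 \<le> N" "0 < \<rho>"
    using \<open>0 \<le> \<rho>\<close> by auto
  define \<theta> where "\<theta> = (1 / 2) powr (1 / real N)"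
  have \<theta>: "0 < \<theta>" "\<theta> < 1" "\<theta> ^ N = 1 / 2"
    using \<open>1 \<le> N\<close> powr_less_mono2[of "1 / real N" "1 / 2" 1]
    by (auto simp: \<theta>_def powr_realpow[symmetric] powr_powr)
  define r where "r = \<rho> * \<theta>"
  have r: "0 < r" "r < \<rho>"
    using \<theta> \<open>0 < \<rho>\<close> by (auto simp: r_def)
  show ?thesis
  proof (rule ccontr)
    assume "\<not> ?thesis"
    then obtain K where K: "\<And>k. K \<le> k \<Longrightarrow> \<not> extremal_upto \<rho> B N (shift k z)"
      by (auto simp: not_frequently eventually_sequentially)
    have drop: "\<exists>j\<in>{1..N}. opnorm (wprod B (shift k z) j) \<le> r ^ j" if k: "K \<le> k" for k
    proof -
      obtain j where j: "j \<in> {1..N}" "opnorm (wprod B (shift k z) j) < \<rho> ^ j / 2"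
        using K[OF k] by (auto simp: extremal_upto_def not_le)
      have "1 / 2 \<le> \<theta> ^ j"
        unfolding \<theta>(3)[symmetric] using j(1) \<theta> by (intro power_decreasing) auto
      then have "\<rho> ^ j / 2 \<le> r ^ j"
        using \<open>0 < \<rho>\<close> by (simp add: r_def power_mult_distrib)
      then show ?thesis using j by (meson less_imp_le order_trans)
    qed
    have step: "opnorm (wprod B z (t + l)) \<le> opnorm (wprod B (shift t z) l) * opnorm (wprod B z t)"
      for t l by (simp add: wprod_add opnorm_mult)
    have growth: "opnorm (wprod B (shift t z) l) \<le> (1 + (\<Sum>i<m. opnorm (B i))) ^ l" for t l
      by (rule opnorm_wprod_le[OF shift_seqs[OF z]])
    obtain D where "\<forall>n\<ge>K. opnorm (wprod B z n) \<le> D * r ^ n"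
      using bounded_by_geometric_if_windows_drop[OF opnorm_nonneg step drop growth _ r(1)]
      by (auto simp: opnorm_nonneg sum_nonneg)
    then have "\<not> (\<exists>\<^sub>F n in sequentially. ((r + \<rho>) / 2) ^ n < opnorm (wprod B z n))"
      by (rule not_frequently_above_geometric) (use r in auto)
    then show False
      using above r by auto
  qed
qed

section \<open>Minimal extremal subshifts\<close>

definition omega_limit :: "(nat \<Rightarrow> 'a::topological_space) \<Rightarrow> (nat \<Rightarrow> 'a) set" where
  "omega_limit y = (\<Inter>K. closure ((\<lambda>k. shift k y) ` {K..}))"

lemma shift_shift: "shift k (shift l z) = shift (l + k) z"
  by (simp add: shift_def add.assoc)

lemma shift_in_invariant: "shift 1 ` Z \<subseteq> Z \<Longrightarrow> y \<in> Z \<Longrightarrow> shift k y \<in> Z"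
proof (induction k)
  case 0
  then show ?case by (simp add: shift_def)
next
  case (Suc k)
  then show ?case
    using shift_shift[of 1 k y] by auto
qed

lemma omega_limit_subset:
  assumes "closed Z" and "shift 1 ` Z \<subseteq> Z" and "y \<in> Z"
  shows "omega_limit y \<subseteq> Z"
proof -
  have "closure ((\<lambda>k. shift k y) ` {0..}) \<subseteq> Z"
    using shift_in_invariant[OF assms(2,3)] assms(1) by (intro closure_minimal) auto
  then show ?thesis
    unfolding omega_limit_def by blast
qed

lemma shift_omega_limit: "shift 1 ` omega_limit y \<subseteq> omega_limit y"
proof -
  have "shift 1 ` closure ((\<lambda>k. shift k y) ` {K..}) \<subseteq> closure ((\<lambda>k. shift k y) ` {K..})" for K
  proof -
    have "shift 1 ` (\<lambda>k. shift k y) ` {K..} \<subseteq> (\<lambda>k. shift k y) ` {K..}"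
      using shift_shift[of 1 _ y] by force
    then show ?thesis
      by (intro order_trans[OF continuous_image_closure_subset closure_mono])
        (auto intro: continuous_on_shift)
  qed
  then show ?thesis
    unfolding omega_limit_def by blast
qed

lemma omega_limit_meets_closed:
  assumes "y \<in> seqs m" and "closed {w. P w}" and "\<exists>\<^sub>F k in sequentially. P (shift k y)"
  shows "\<exists>w\<in>omega_limit y. P w"
proof -
  define S where "S K = closure ((\<lambda>k. shift k y) ` {k. K \<le> k \<and> P (shift k y)})" for K
  have "\<Inter>(range S) \<noteq> {}"
  proof (rule closed_chain_Inter_nonempty[OF compact_seqs])
    fix T assume "T \<in> range S"
    then obtain K where "T = S K" by blast
    moreover have "(\<lambda>k. shift k y) ` {k. K \<le> k \<and> P (shift k y)} \<noteq> {}"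
      using assms(3) by (auto simp: frequently_sequentially)
    moreover have "closure ((\<lambda>k. shift k y) ` {k. K \<le> k \<and> P (shift k y)}) \<subseteq> seqs m"
      using assms(1) closed_seqs
      by (intro closure_minimal) (auto intro: shift_seqs)
    ultimately show "closed T \<and> T \<noteq> {} \<and> T \<subseteq> seqs m"
      by (auto simp: S_def)
  next
    have S_anti: "S K' \<subseteq> S K" if "K \<le> K'" for K K'
      unfolding S_def using that by (intro closure_mono) auto
    show "T \<subseteq> T' \<or> T' \<subseteq> T" if "T \<in> range S" "T' \<in> range S" for T T'
      using that by (metis rangeE nat_le_linear S_anti)
  qed
  then obtain w where w: "\<And>K. w \<in> S K" by blast
  have "S K \<subseteq> closure ((\<lambda>k. shift k y) ` {K..})" for K
    unfolding S_def by (intro closure_mono) auto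
  then have "w \<in> omega_limit y"
    using w unfolding omega_limit_def by blast
  moreover have "S 0 \<subseteq> {w. P w}"
    unfolding S_def by (rule closure_minimal[OF _ assms(2)]) auto
  then have "P w"
    using w[of 0] by blast
  ultimately show ?thesis by blast
qed

lemma recurrent_if_in_omega_limit:
  assumes "y \<in> omega_limit y"
  shows "recurrent y"
  unfolding recurrent_def
proof
  fix u assume "u \<in> subwords y"
  then obtain k n where u: "u = map y [k+1..<k+n+1]"
    unfolding subwords_def by blast
  have "\<exists>k'\<ge>K. map y [k'+1..<k'+n+1] = u" for K
  proof -
    have "y \<in> closure ((\<lambda>k. shift k y) ` {K..})"
      using assms by (auto simp: omega_limit_def)
    then obtain l where l: "K \<le> l" "\<forall>i\<in>{1..k+n}. shift l y i = y i"
      using closure_cylinderD[of "{1..k+n}"] by fastforce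
    have "y (l + (k + 1 + i)) = y (k + 1 + i)" if "i < n" for i
      using l(2)[rule_format, of "k + 1 + i"] that unfolding shift_def by simp
    then have "map y [(l+k)+1..<(l+k)+n+1] = u"
      unfolding u by (auto simp: list_eq_iff_nth_eq add.assoc simp del: upt_Suc)
    then show ?thesis
      using l(1) by (intro exI[of _ "l+k"]) auto
  qed
  moreover have "length u = n"
    using u by simp
  ultimately show "infinite {k'. map y [k'+1..<k'+length u+1] = u}"
    unfolding infinite_nat_iff_unbounded_le by (simp del: upt_Suc)
qed

definition extremal_subshifts ::
    "real \<Rightarrow> (nat \<Rightarrow> real^'d^'d) \<Rightarrow> (nat \<Rightarrow> nat) set \<Rightarrow> (nat \<Rightarrow> nat) set set" where
  "extremal_subshifts \<rho> B Z0 =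
     {Z. Z \<subseteq> Z0 \<and> closed Z \<and> shift 1 ` Z \<subseteq> Z \<and> (\<forall>N. \<exists>z\<in>Z. extremal_upto \<rho> B N z)}"

lemma Inter_chain_in_extremal_subshifts:
  assumes "Z0 \<subseteq> seqs m" and "C \<noteq> {}" and "subset.chain (extremal_subshifts \<rho> B Z0) C"
  shows "\<Inter>C \<in> extremal_subshifts \<rho> B Z0"
proof -
  have sub: "\<And>Z. Z \<in> C \<Longrightarrow> Z \<subseteq> Z0" and clos: "\<And>Z. Z \<in> C \<Longrightarrow> closed Z"
    and inv: "\<And>Z. Z \<in> C \<Longrightarrow> shift 1 ` Z \<subseteq> Z"
    and ext: "\<And>Z N. Z \<in> C \<Longrightarrow> \<exists>z\<in>Z. extremal_upto \<rho> B N z"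
    and chain: "\<And>Z Z'. Z \<in> C \<Longrightarrow> Z' \<in> C \<Longrightarrow> Z \<subseteq> Z' \<or> Z' \<subseteq> Z"
    using assms(3) by (auto simp: subset_chain_def extremal_subshifts_def)
  have "\<exists>z\<in>\<Inter>C. extremal_upto \<rho> B N z" for N
  proof -
    let ?E = "{z. extremal_upto \<rho> B N z}"
    have "\<Inter>((\<lambda>Z. Z \<inter> ?E) ` C) \<noteq> {}"
    proof (rule closed_chain_Inter_nonempty[OF compact_seqs])
      fix T assume "T \<in> (\<lambda>Z. Z \<inter> ?E) ` C"
      then obtain Z where Z: "Z \<in> C" "T = Z \<inter> ?E" by blast
      have "closed T"
        unfolding Z(2) by (intro closed_Int clos Z(1) closed_extremal_upto)
      moreover have "T \<noteq> {}" "T \<subseteq> seqs m"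
        using ext[OF Z(1), of N] sub[OF Z(1)] assms(1) unfolding Z(2) by auto
      ultimately show "closed T \<and> T \<noteq> {} \<and> T \<subseteq> seqs m" by blast
    next
      fix T T' assume "T \<in> (\<lambda>Z. Z \<inter> ?E) ` C" "T' \<in> (\<lambda>Z. Z \<inter> ?E) ` C"
      then obtain Z Z' where "Z \<in> C" "Z' \<in> C" "T = Z \<inter> ?E" "T' = Z' \<inter> ?E"
        by blast
      then show "T \<subseteq> T' \<or> T' \<subseteq> T"
        using chain by auto
    qed
    then obtain z where "z \<in> \<Inter>((\<lambda>Z. Z \<inter> ?E) ` C)"
      by blast
    then show ?thesis
      using \<open>C \<noteq> {}\<close> by auto
  qed
  moreover have "closed (\<Inter>C)"
    using clos by (intro closed_Inter) blast
  moreover have "\<Inter>C \<subseteq> Z0"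
    using sub \<open>C \<noteq> {}\<close> by blast
  moreover have "shift 1 ` \<Inter>C \<subseteq> \<Inter>C"
    using inv by blast
  ultimately show ?thesis
    unfolding extremal_subshifts_def by blast
qed

lemma extremal_point_in_extremal_subshift:
  assumes "Z \<in> extremal_subshifts \<rho> B Z0" and "Z0 \<subseteq> seqs m"
  shows "\<exists>y\<in>Z. \<forall>N. extremal_upto \<rho> B N y"
proof -
  define E where "E N = Z \<inter> {z. extremal_upto \<rho> B N z}" for N
  have Z: "Z \<subseteq> seqs m" "closed Z" "\<And>N. \<exists>z\<in>Z. extremal_upto \<rho> B N z"
    using assms unfolding extremal_subshifts_def by auto
  have "\<Inter>(range E) \<noteq> {}"
  proof (rule closed_chain_Inter_nonempty[OF compact_seqs])
    fix T assume "T \<in> range E"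
    then obtain N where T: "T = E N" by blast
    have "closed T"
      unfolding T E_def by (intro closed_Int Z(2) closed_extremal_upto)
    moreover have "T \<noteq> {}" "T \<subseteq> seqs m"
      using Z(1) Z(3)[of N] unfolding T E_def by auto
    ultimately show "closed T \<and> T \<noteq> {} \<and> T \<subseteq> seqs m" by blast
  next
    have E_anti: "E N' \<subseteq> E N" if "N \<le> N'" for N N'
      using that extremal_upto_mono unfolding E_def by blast
    fix T T' assume "T \<in> range E" "T' \<in> range E"
    then show "T \<subseteq> T' \<or> T' \<subseteq> T"
      by (metis rangeE nat_le_linear E_anti)
  qed
  then show ?thesis
    unfolding E_def by blast
qed

lemma omega_limit_in_extremal_subshifts:
  assumes Z: "Z \<in> extremal_subshifts \<rho> B Z0" and "Z0 \<subseteq> seqs m" "0 \<le> \<rho>"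
    and y: "y \<in> Z" "\<forall>N. extremal_upto \<rho> B N y"
  shows "omega_limit y \<in> extremal_subshifts \<rho> B Z0" and "omega_limit y \<subseteq> Z"
proof -
  show sub: "omega_limit y \<subseteq> Z"
    using Z y(1) by (intro omega_limit_subset) (auto simp: extremal_subshifts_def)
  have "y \<in> seqs m"
    using Z y(1) assms(2) by (auto simp: extremal_subshifts_def)
  have "\<exists>w\<in>omega_limit y. extremal_upto \<rho> B N w" for N
  proof (rule omega_limit_meets_closed[OF \<open>y \<in> seqs m\<close> closed_extremal_upto])
    show "\<exists>\<^sub>F k in sequentially. extremal_upto \<rho> B N (shift k y)"
      using \<open>y \<in> seqs m\<close> \<open>0 \<le> \<rho>\<close> frequently_above_if_extremal_upto[OF y(2)]
      by (rule frequently_extremal_upto_shift)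
  qed
  moreover have "closed (omega_limit y)"
    unfolding omega_limit_def by blast
  ultimately show "omega_limit y \<in> extremal_subshifts \<rho> B Z0"
    using sub Z shift_omega_limit[of y] unfolding extremal_subshifts_def by auto
qed

lemma jsr_nonneg_if_very_weakly_extremal:
  assumes "very_weakly_extremal B m x"
  shows "0 \<le> jsr B m"
proof -
  have "ereal 0 \<le> limsup (\<lambda>n. ereal (opnorm (wprod B x n) powr (1 / real n)))"
    by (intro le_Limsup) auto
  then show ?thesis
    using assms by (simp add: very_weakly_extremal_def)
qed

lemma frequently_above_if_very_weakly_extremal:
  assumes "very_weakly_extremal B m x" and q: "0 < q" "q < jsr B m"
  shows "\<exists>\<^sub>F n in sequentially. q ^ n < opnorm (wprod B x n)"
proof (rule ccontr)
  assume "\<not> ?thesis"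
  then have "\<forall>\<^sub>F n in sequentially. opnorm (wprod B x n) \<le> q ^ n \<and> 1 \<le> n"
    by (auto simp: not_frequently not_less intro: eventually_conj eventually_ge_at_top)
  then have "\<forall>\<^sub>F n in sequentially. ereal (opnorm (wprod B x n) powr (1 / real n)) \<le> ereal q"
  proof (rule eventually_mono)
    fix n assume n: "opnorm (wprod B x n) \<le> q ^ n \<and> 1 \<le> n"
    have "opnorm (wprod B x n) powr (1 / real n) \<le> (q ^ n) powr (1 / real n)"
      using n by (intro powr_mono2) (auto simp: opnorm_nonneg)
    also have "\<dots> = q"
      using q n by (simp add: powr_realpow[symmetric] powr_powr)
    finally show "ereal (opnorm (wprod B x n) powr (1 / real n)) \<le> ereal q"
      by simp
  qed
  then have "limsup (\<lambda>n. ereal (opnorm (wprod B x n) powr (1 / real n))) \<le> ereal q"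
    by (rule Limsup_bounded)
  then show False
    using assms by (simp add: very_weakly_extremal_def)
qed

lemma strongly_extremal_if_extremal_upto:
  assumes "\<forall>N. extremal_upto (jsr B m) B N y"
  shows "strongly_extremal B m y"
  unfolding strongly_extremal_def
proof (intro exI[of _ "1 / 2"] conjI allI impI)
  fix n :: nat assume "1 \<le> n"
  then have "n \<in> {1..n}" by simp
  then have "jsr B m ^ n / 2 \<le> opnorm (wprod B y n)"
    using assms unfolding extremal_upto_def by blast
  then show "1 / 2 * jsr B m ^ n \<le> opnorm (wprod B y n)"
    by simp
qed simp

lemma recurrent_extremal_point_exists:
  assumes Z0: "Z0 \<in> extremal_subshifts \<rho> B Z0" and "Z0 \<subseteq> seqs m" and "0 \<le> \<rho>"
  shows "\<exists>y\<in>Z0. recurrent y \<and> (\<forall>N. extremal_upto \<rho> B N y)"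
proof -
  have "\<exists>Z\<in>extremal_subshifts \<rho> B Z0. \<forall>X\<in>extremal_subshifts \<rho> B Z0. X \<subseteq> Z \<longrightarrow> X = Z"
    by (rule subset_Zorn_minimal)
      (use Z0 Inter_chain_in_extremal_subshifts[OF \<open>Z0 \<subseteq> seqs m\<close>] in blast)+
  then obtain Z where Z: "Z \<in> extremal_subshifts \<rho> B Z0"
      and minimal: "\<forall>X\<in>extremal_subshifts \<rho> B Z0. X \<subseteq> Z \<longrightarrow> X = Z"
    by blast
  obtain y where y: "y \<in> Z" "\<forall>N. extremal_upto \<rho> B N y"
    using extremal_point_in_extremal_subshift[OF Z \<open>Z0 \<subseteq> seqs m\<close>] by blast
  have "omega_limit y = Z"
    using minimal omega_limit_in_extremal_subshifts[OF Z \<open>Z0 \<subseteq> seqs m\<close> \<open>0 \<le> \<rho>\<close> y] by blast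
  then have "recurrent y"
    using y(1) by (intro recurrent_if_in_omega_limit) simp
  moreover have "y \<in> Z0"
    using y(1) Z unfolding extremal_subshifts_def by blast
  ultimately show ?thesis
    using y(2) by blast
qed

lemma subword_closure_in_extremal_subshifts:
  assumes "x \<in> seqs m" and "very_weakly_extremal B m x"
  defines "Z0 \<equiv> seqs m \<inter> {w. subwords w \<subseteq> subwords x}"
  shows "Z0 \<in> extremal_subshifts (jsr B m) B Z0"
proof -
  have "\<exists>z\<in>Z0. extremal_upto (jsr B m) B N z" for N
  proof -
    have "\<exists>\<^sub>F k in sequentially. extremal_upto (jsr B m) B N (shift k x)"
      using assms(1) jsr_nonneg_if_very_weakly_extremal[OF assms(2)]
        frequently_above_if_very_weakly_extremal[OF assms(2)]
      by (rule frequently_extremal_upto_shift)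
    then obtain k where "extremal_upto (jsr B m) B N (shift k x)"
      by (auto dest: frequently_ex)
    then show ?thesis
      using assms(1) shift_seqs subwords_shift unfolding Z0_def by blast
  qed
  then show ?thesis
    using closed_seqs closed_subwords_subset shift_seqs subwords_shift
    unfolding extremal_subshifts_def Z0_def by fastforce
qed

theorem lemma2:
  fixes B :: "nat \<Rightarrow> real^'d^'d" and m :: nat and x :: "nat \<Rightarrow> nat"
  assumes "x \<in> seqs m"
    and "very_weakly_extremal B m x"
  shows "\<exists>y \<in> seqs m. recurrent y \<and> strongly_extremal B m y \<and> subwords y \<subseteq> subwords x"
proof -
  let ?Z0 = "seqs m \<inter> {w. subwords w \<subseteq> subwords x}"
  obtain y where "y \<in> ?Z0" "recurrent y" "\<forall>N. extremal_upto (jsr B m) B N y"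
    using recurrent_extremal_point_exists[OF subword_closure_in_extremal_subshifts[OF assms]]
      jsr_nonneg_if_very_weakly_extremal[OF assms(2)] by blast
  then show ?thesis
    using strongly_extremal_if_extremal_upto by blast
qed

end
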